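(* Let $A=KQ/I$ be a finite-dimensional gentle algebra and let $B$ be a band for $A$ with an auto-reaching, i.e. there are a finite substring $L$ on top of $B^\infty$ and a finite substring $L'$ at the bottom of $B^\infty$ which are equal as strings (either $L'=L$ or $L'=L^{-1}$ as walks). Then $\ell(L)\le\ell(B)-2$.
   Context: Letters are arrows $\alpha\in Q_1$ (direct letters, traversed from $s(\alpha)$ to $t(\alpha)$) and formal inverses $\alpha^{-1}$ (inverse letters, traversed from $t(\alpha)$ to $s(\alpha)$). A string is a reduced walk (no letter followed by its own inverse) in $Q$ avoiding the relations of $I$ and their inverses; a string is identified with its inverse walk; $\ell$ denotes length (number of letters). A band is a closed walk $B=b_1\cdots b_m$ ($m\ge1$) all of whose powers are strings, considered up to rotation and inversion; $\ell(B)=m$. $B^\infty$ is the bi-infinite walk $\cdots b_1\cdots b_m b_1\cdots b_m\cdots$. A finite consecutive subwalk $L$ of $B^\infty$ (possibly of length $0$) is on top of $B^\infty$ if the letter immediately before $L$ is an inverse letter and the letter immediately after $L$ is a direct letter (i.e. the adjacent arrows point away from $L$); it is at the bottom if the letter immediately before is direct and the letter immediately after is inverse (the adjacent arrows point into $L$). *)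

theory Defs
  imports Main
begin

(* Since gentle algebras are defined by monomial relations of length 2,
   I is given by the set R of pairs (alpha,beta) such that the path
   "alpha then beta" (t alpha = s beta) is a relation. *)

datatype 'a letter = Dir 'a | Inv 'a

fun lsrc :: "('a \<Rightarrow> 'v) \<Rightarrow> ('a \<Rightarrow> 'v) \<Rightarrow> 'a letter \<Rightarrow> 'v" where
  "lsrc s t (Dir a) = s a"
| "lsrc s t (Inv a) = t a"

fun ltgt :: "('a \<Rightarrow> 'v) \<Rightarrow> ('a \<Rightarrow> 'v) \<Rightarrow> 'a letter \<Rightarrow> 'v" where
  "ltgt s t (Dir a) = t a"
| "ltgt s t (Inv a) = s a"

fun linv :: "'a letter \<Rightarrow> 'a letter" where
  "linv (Dir a) = Inv a"
| "linv (Inv a) = Dir a"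

fun is_direct :: "'a letter \<Rightarrow> bool" where
  "is_direct (Dir a) = True"
| "is_direct (Inv a) = False"

fun larrow :: "'a letter \<Rightarrow> 'a" where
  "larrow (Dir a) = a"
| "larrow (Inv a) = a"

definition inv_walk :: "'a letter list \<Rightarrow> 'a letter list" where
  "inv_walk w = rev (map linv w)"

definition rel_free_path :: "'a set \<Rightarrow> ('a \<Rightarrow> 'v) \<Rightarrow> ('a \<Rightarrow> 'v) \<Rightarrow> ('a \<times> 'a) set \<Rightarrow> 'a list \<Rightarrow> bool" where
  "rel_free_path Q1 s t R p \<longleftrightarrow> set p \<subseteq> Q1 \<and>
     (\<forall>i. Suc i < length p \<longrightarrow> t (p ! i) = s (p ! Suc i) \<and> (p ! i, p ! Suc i) \<notin> R)"

definition fd_gentle :: "'v set \<Rightarrow> 'a set \<Rightarrow> ('a \<Rightarrow> 'v) \<Rightarrow> ('a \<Rightarrow> 'v) \<Rightarrow> ('a \<times> 'a) set \<Rightarrow> bool" where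
  "fd_gentle Q0 Q1 s t R \<longleftrightarrow>
     finite Q0 \<and> finite Q1 \<and>
     (\<forall>a\<in>Q1. s a \<in> Q0 \<and> t a \<in> Q0) \<and>
     R \<subseteq> {(a, b). a \<in> Q1 \<and> b \<in> Q1 \<and> t a = s b} \<and>
     (\<forall>v\<in>Q0. card {a\<in>Q1. s a = v} \<le> 2 \<and> card {a\<in>Q1. t a = v} \<le> 2) \<and>
     (\<forall>b\<in>Q1. card {a\<in>Q1. t a = s b \<and> (a, b) \<notin> R} \<le> 1 \<and>
              card {c\<in>Q1. s c = t b \<and> (b, c) \<notin> R} \<le> 1 \<and>
              card {a\<in>Q1. (a, b) \<in> R} \<le> 1 \<and>
              card {c\<in>Q1. (b, c) \<in> R} \<le> 1) \<and>
     (\<exists>N. \<forall>p. rel_free_path Q1 s t R p \<longrightarrow> length p \<le> N)"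

definition is_string :: "'a set \<Rightarrow> ('a \<Rightarrow> 'v) \<Rightarrow> ('a \<Rightarrow> 'v) \<Rightarrow> ('a \<times> 'a) set \<Rightarrow> 'a letter list \<Rightarrow> bool" where
  "is_string Q1 s t R w \<longleftrightarrow> larrow ` set w \<subseteq> Q1 \<and>
     (\<forall>i. Suc i < length w \<longrightarrow>
        ltgt s t (w ! i) = lsrc s t (w ! Suc i) \<and>
        w ! Suc i \<noteq> linv (w ! i) \<and>
        (\<forall>a b. \<not> (w ! i = Dir a \<and> w ! Suc i = Dir b \<and> (a, b) \<in> R)) \<and>
        (\<forall>a b. \<not> (w ! i = Inv b \<and> w ! Suc i = Inv a \<and> (a, b) \<in> R)))"

definition is_band :: "'a set \<Rightarrow> ('a \<Rightarrow> 'v) \<Rightarrow> ('a \<Rightarrow> 'v) \<Rightarrow> ('a \<times> 'a) set \<Rightarrow> 'a letter list \<Rightarrow> bool" where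
  "is_band Q1 s t R B \<longleftrightarrow> length B \<ge> 1 \<and>
     (\<forall>n\<ge>1. is_string Q1 s t R (concat (replicate n B)))"

definition binf :: "'a letter list \<Rightarrow> int \<Rightarrow> 'a letter" where
  "binf B i = B ! nat (i mod int (length B))"

definition subw :: "'a letter list \<Rightarrow> int \<Rightarrow> nat \<Rightarrow> 'a letter list" where
  "subw B i k = map (\<lambda>j. binf B (i + int j)) [0..<k]"

(* start/end vertex of that subwalk (meaningful also for k = 0) *)
definition subw_start :: "('a \<Rightarrow> 'v) \<Rightarrow> ('a \<Rightarrow> 'v) \<Rightarrow> 'a letter list \<Rightarrow> int \<Rightarrow> 'v" where
  "subw_start s t B i = ltgt s t (binf B (i - 1))"

definition subw_end :: "('a \<Rightarrow> 'v) \<Rightarrow> ('a \<Rightarrow> 'v) \<Rightarrow> 'a letter list \<Rightarrow> int \<Rightarrow> nat \<Rightarrow> 'v" where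
  "subw_end s t B i k = lsrc s t (binf B (i + int k))"

definition on_top :: "'a letter list \<Rightarrow> int \<Rightarrow> nat \<Rightarrow> bool" where
  "on_top B i k \<longleftrightarrow> \<not> is_direct (binf B (i - 1)) \<and> is_direct (binf B (i + int k))"

definition at_bottom :: "'a letter list \<Rightarrow> int \<Rightarrow> nat \<Rightarrow> bool" where
  "at_bottom B i k \<longleftrightarrow> is_direct (binf B (i - 1)) \<and> \<not> is_direct (binf B (i + int k))"

(* the subwalks (i,k) and (j,k) of B^infinity are equal as strings:
   equal as walks, or one is the inverse walk of the other (with matching endpoints,
   which matters only for length 0) *)
definition equal_as_strings :: "('a \<Rightarrow> 'v) \<Rightarrow> ('a \<Rightarrow> 'v) \<Rightarrow> 'a letter list \<Rightarrow> int \<Rightarrow> int \<Rightarrow> nat \<Rightarrow> bool" where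
  "equal_as_strings s t B i j k \<longleftrightarrow>
     (subw B j k = subw B i k \<and> subw_start s t B j = subw_start s t B i) \<or>
     (subw B j k = inv_walk (subw B i k) \<and> subw_start s t B j = subw_end s t B i k)"

definition auto_reaching :: "('a \<Rightarrow> 'v) \<Rightarrow> ('a \<Rightarrow> 'v) \<Rightarrow> 'a letter list \<Rightarrow> int \<Rightarrow> int \<Rightarrow> nat \<Rightarrow> bool" where
  "auto_reaching s t B i j k \<longleftrightarrow> on_top B i k \<and> at_bottom B j k \<and> equal_as_strings s t B i j k"

end

theory Submission
  imports Defs
begin

text \<open>
  If \<open>\<ell>(L) + 1 = \<ell>(B)\<close>, the letters just
  before and just after \<open>L\<close> are the same letter of \<open>B\<close>, so they cannot be an inverse and a
  direct letter. If \<open>\<ell>(L) \<ge> \<ell>(B)\<close>, then \<open>L'\<close> contains, at position \<open>\<ell>(B)\<close>, a copy of the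
  direct letter preceding it; reading off the same position of \<open>L\<close> (or of \<open>L\<^sup>-\<^sup>1\<close>) produces
  the inverse letter preceding \<open>L\<close> (or the inverse of the direct letter following \<open>L\<close>).
\<close>

lemma binf_add_period:
  assumes "length B dvd n"
  shows "binf B (x + int n) = binf B x"
proof -
  from assms obtain c where "n = length B * c" by (auto elim: dvdE)
  then show ?thesis by (simp add: binf_def)
qed

lemma length_subw [simp]: "length (subw B i k) = k"
  by (simp add: subw_def)

lemma nth_subw: "r < k \<Longrightarrow> subw B i k ! r = binf B (i + int r)"
  by (simp add: subw_def)

lemma is_direct_linv [simp]: "is_direct (linv x) \<longleftrightarrow> \<not> is_direct x"
  by (cases x) auto

lemma on_top_period_not_dvd: "on_top B i k \<Longrightarrow> \<not> length B dvd Suc k"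
  using binf_add_period[of B "Suc k" "i - 1"] by (auto simp: on_top_def)

lemma nth_subw_letter_before:
  assumes "B \<noteq> []" "length B \<le> k"
  shows "subw B j k ! (length B - 1) = binf B (j - 1)"
proof -
  from assms(1) have "0 < length B" by simp
  then have "subw B j k ! (length B - 1) = binf B (j + int (length B - 1))"
    using assms(2) by (intro nth_subw) linarith
  also have "j + int (length B - 1) = j - 1 + int (length B)"
    using assms(1) by (simp add: of_nat_diff Suc_le_eq)
  also have "binf B \<dots> = binf B (j - 1)"
    by (simp add: binf_add_period)
  finally show ?thesis .
qed

lemma nth_subw_letter_after:
  assumes "B \<noteq> []" "length B \<le> k"
  shows "subw B i k ! (k - length B) = binf B (i + int k)"
proof -
  from assms(1) have "0 < length B" by simp
  then have "subw B i k ! (k - length B) = binf B (i + int (k - length B))"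
    using assms(2) by (intro nth_subw) linarith
  also have "\<dots> = binf B (i + int (k - length B) + int (length B))"
    by (simp add: binf_add_period)
  also have "i + int (k - length B) + int (length B) = i + int k"
    using assms(2) by (simp add: of_nat_diff)
  finally show ?thesis .
qed

lemma auto_reaching_shorter_than_band:
  assumes "auto_reaching s t B i j k" and "B \<noteq> []"
  shows "k < length B"
proof (rule ccontr)
  assume "\<not> k < length B"
  then have long: "length B \<le> k" by simp
  let ?p = "length B - 1"
  from assms(2) have "0 < length B" by simp
  then have p: "?p < k" using long by linarith
  have before_i: "\<not> is_direct (binf B (i - 1))"
    and after_i: "is_direct (binf B (i + int k))"
    and before_j: "is_direct (binf B (j - 1))"
    using assms(1) by (auto simp: auto_reaching_def on_top_def at_bottom_def)
  from assms(1) consider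
      (same) "subw B j k = subw B i k"
    | (inverse) "subw B j k = inv_walk (subw B i k)"
    by (auto simp: auto_reaching_def equal_as_strings_def)
  then show False
  proof cases
    case same
    then have "binf B (j - 1) = binf B (i - 1)"
      using nth_subw_letter_before[OF assms(2) long] by metis
    with before_i before_j show False by simp
  next
    case inverse
    have "k - 1 - ?p = k - length B" using \<open>0 < length B\<close> by simp
    then have "subw B j k ! ?p = linv (subw B i k ! (k - length B))"
      using inverse p by (simp add: inv_walk_def rev_nth)
    then have "binf B (j - 1) = linv (binf B (i + int k))"
      using nth_subw_letter_before[OF assms(2) long] nth_subw_letter_after[OF assms(2) long] by simp
    with after_i before_j show False by (metis is_direct_linv)
  qed
qed

theorem mainTheorem6:
  fixes Q0 :: "'v set" and Q1 :: "'a set" and s t :: "'a \<Rightarrow> 'v"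
    and R :: "('a \<times> 'a) set" and B :: "'a letter list"
    and i j :: int and k :: nat
  assumes "fd_gentle Q0 Q1 s t R"
    and "is_band Q1 s t R B"
    and "auto_reaching s t B i j k"
  shows "length (subw B i k) + 2 \<le> length B"
proof -
  have "B \<noteq> []" using assms(2) by (auto simp: is_band_def)
  with assms(3) have "k < length B" by (rule auto_reaching_shorter_than_band)
  moreover have "\<not> length B dvd Suc k"
    using assms(3) by (auto simp: auto_reaching_def dest: on_top_period_not_dvd)
  then have "Suc k \<noteq> length B" by auto
  ultimately show ?thesis by simp
qed

end
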